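(* If problem (BM$_{\mathbf n}$) has a spurious 2-critical point, then $C$ lies in the set $\underline{\mathcal V}\times\overline{\mathcal V}\times\{0^d\}+\operatorname{image}\mathcal{A}^*\subseteq\mathbb{S}^{\mathbf n}\times\mathbb{R}^d$ (Minkowski sum), where $\underline{\mathcal V}=\bigcup_{j\in[k]:\,p_j\le n_j}\big(\mathbb{S}^{n_1}\times\cdots\times\mathbb{S}^{n_{j-1}}\times\mathbb{S}^{n_j}_{n_j-p_j}\times\mathbb{S}^{n_{j+1}}\times\cdots\times\mathbb{S}^{n_k}\big)\subseteq\mathbb{S}^{n_1}\times\cdots\times\mathbb{S}^{n_k}$ and $\overline{\mathcal V}=\bigcup_{(r_{k+1},\dots,r_\ell)}\big(\mathbb{S}^{n_{k+1}}_{n_{k+1}-r_{k+1}}\times\cdots\times\mathbb{S}^{n_\ell}_{n_\ell-r_\ell}\big)\subseteq\mathbb{S}^{n_{k+1}}\times\cdots\times\mathbb{S}^{n_\ell}$, the last union being over all possible rank tuples, and $\mathbb{S}^{r}_{s}=\{Z\in\mathbb{S}^r:\operatorname{rank}Z\le s\}$.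
   Context: Let $\mathbb{S}^{r}$ denote real symmetric $r\times r$ matrices, $\mathbb{S}^r_+$ the PSD cone, $A\bullet B=\operatorname{trace}(A^TB)$. Let $\mathbf n=(n_1,\dots,n_\ell)$, $d\ge 0$, $1\le k\le \ell$, $\mathbb{S}^{\mathbf n}=\mathbb{S}^{n_1}\times\cdots\times\mathbb{S}^{n_\ell}$, $\mathbb{S}^{\mathbf n}_+=\mathbb{S}^{n_1}_+\times\cdots\times\mathbb{S}^{n_\ell}_+$, with the inner product $\langle\cdot,\cdot\rangle$ on $\mathbb{S}^{\mathbf n}\times\mathbb{R}^d$ being the sum of trace inner products and the dot product. Let $C\in\mathbb{S}^{\mathbf n}\times\mathbb{R}^d$, $b\in\mathbb{R}^m$, and $\mathcal{A}:\mathbb{S}^{\mathbf n}\times\mathbb{R}^d\to\mathbb{R}^m$ linear, written $\mathcal{A}(X_1,\dots,X_\ell,x)=\sum_j\mathcal{A}_j(X_j)+\mathcal{A}_0(x)$ with $\mathcal{A}_j(X_j)=(A_{i,j}\bullet X_j)_{i\in[m]}$, $A_{i,j}\in\mathbb{S}^{n_j}$ (this formula also defines $\mathcal{A}_j$ on nonsymmetric matrices); $\mathcal{A}^*$ is its adjoint. Let $\mathscr{X}=\{X=(X_1,\dots,X_\ell,x)\in\mathbb{S}^{\mathbf n}_+\times\mathbb{R}^d:\mathcal{A}(X)=b\}$, assumed nonempty, with $\min_{X\in\mathscr{X}}\langle C,X\rangle$ attained. For positive integers $p_1,\dots,p_k$, let $Y=(Y_1,\dots,Y_k)$, $Y_j\in\mathbb{R}^{n_j\times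 p_j}$, $q(Y)=(Y_1Y_1^T,\dots,Y_kY_k^T)$, $\overline X=(X_{k+1},\dots,X_\ell)$. Problem (BM$_{\mathbf n}$) is $\min_{Y,\overline X,x}\langle C,(q(Y),\overline X,x)\rangle$ subject to $(q(Y),\overline X,x)\in\mathscr{X}$. For $\lambda\in\mathbb{R}^m$ let $S(\lambda)=C-\mathcal{A}^*(\lambda)$ with components $S_j(\lambda)\in\mathbb{S}^{n_j}$ and $s(\lambda)\in\mathbb{R}^d$. A point $(Y,\overline X,x)$ is 2-critical if $(q(Y),\overline X,x)\in\mathscr{X}$ and there is $\lambda\in\mathbb{R}^m$ with $S_j(\lambda)\in\mathbb{S}^{n_j}_+$ for $j>k$, $\sum_{j>k}S_j(\lambda)\bullet X_j=0$, $s(\lambda)=0$, $S_j(\lambda)Y_j=0$ for $j\in[k]$, and, for each $j\in[k]$, $S_j(\lambda)\bullet U_jU_j^T\ge0$ for all $U_j\in\mathbb{R}^{n_j\times p_j}$ with $\mathcal{A}_j(U_jY_j^T)=0$. It is spurious if it is not a global minimizer of (BM$_{\mathbf n}$). A tuple $(r_{k+1},\dots,r_\ell)$ is a possible rank tuple if some $X\in\mathscr{X}$ has $\operatorname{rank}X_j=r_j$ for all $j>k$. *)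

theory Defs
  imports "Jordan_Normal_Form.DL_Rank"
begin

text \<open>Block matrices of varying sizes are represented as JNF matrices ('real mat')
  with explicit dimension constraints. Blocks are indexed by j in {1..l},
  constraints by i in {0..<m} (vectors in R^m are 'real vec' of dimension m).\<close>

definition mtrace :: "real mat \<Rightarrow> real" where
  "mtrace M = (\<Sum>i<dim_row M. M $$ (i,i))"

definition frob :: "real mat \<Rightarrow> real mat \<Rightarrow> real" where
  "frob P Q = mtrace (transpose_mat P * Q)"

definition sym_mat :: "nat \<Rightarrow> real mat \<Rightarrow> bool" where
  "sym_mat r M \<longleftrightarrow> M \<in> carrier_mat r r \<and> transpose_mat M = M"

definition psd_mat :: "nat \<Rightarrow> real mat \<Rightarrow> bool" where
  "psd_mat r M \<longleftrightarrow> sym_mat r M \<and> (\<forall>v\<in>carrier_vec r. 0 \<le> v \<bullet> (M *\<^sub>v v))"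

definition mrank :: "real mat \<Rightarrow> nat" where
  "mrank M = vec_space.rank (dim_row M) M"

definition Ablk :: "nat \<Rightarrow> (nat \<Rightarrow> nat \<Rightarrow> real mat) \<Rightarrow> nat \<Rightarrow> real mat \<Rightarrow> real vec" where
  "Ablk m A j M = vec m (\<lambda>i. frob (A i j) M)"

definition Aop :: "nat \<Rightarrow> nat \<Rightarrow> (nat \<Rightarrow> nat \<Rightarrow> real mat) \<Rightarrow> real mat
     \<Rightarrow> (nat \<Rightarrow> real mat) \<Rightarrow> real vec \<Rightarrow> real vec" where
  "Aop m l A A0 X x = vec m (\<lambda>i. (\<Sum>j=1..l. frob (A i j) (X j)) + row A0 i \<bullet> x)"

definition adjblk :: "nat \<Rightarrow> (nat \<Rightarrow> nat) \<Rightarrow> (nat \<Rightarrow> nat \<Rightarrow> real mat) \<Rightarrow> real vec \<Rightarrow> nat \<Rightarrow> real mat" where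
  "adjblk m n A lam j = mat (n j) (n j) (\<lambda>(r,s). \<Sum>i<m. lam $ i * A i j $$ (r,s))"

definition Sblk :: "nat \<Rightarrow> (nat \<Rightarrow> nat) \<Rightarrow> (nat \<Rightarrow> nat \<Rightarrow> real mat) \<Rightarrow> (nat \<Rightarrow> real mat)
     \<Rightarrow> real vec \<Rightarrow> nat \<Rightarrow> real mat" where
  "Sblk m n A C lam j = C j - adjblk m n A lam j"

definition svec :: "real mat \<Rightarrow> real vec \<Rightarrow> real vec \<Rightarrow> real vec" where
  "svec A0 c lam = c - transpose_mat A0 *\<^sub>v lam"

definition feas :: "(nat \<Rightarrow> nat) \<Rightarrow> nat \<Rightarrow> nat \<Rightarrow> nat \<Rightarrow> (nat \<Rightarrow> nat \<Rightarrow> real mat) \<Rightarrow> real mat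
     \<Rightarrow> real vec \<Rightarrow> (nat \<Rightarrow> real mat) \<Rightarrow> real vec \<Rightarrow> bool" where
  "feas n l d m A A0 b X x \<longleftrightarrow>
     (\<forall>j\<in>{1..l}. psd_mat (n j) (X j)) \<and> x \<in> carrier_vec d \<and> Aop m l A A0 X x = b"

definition obj :: "nat \<Rightarrow> (nat \<Rightarrow> real mat) \<Rightarrow> real vec \<Rightarrow> (nat \<Rightarrow> real mat) \<Rightarrow> real vec \<Rightarrow> real" where
  "obj l C c X x = (\<Sum>j=1..l. frob (C j) (X j)) + c \<bullet> x"

definition qY :: "nat \<Rightarrow> (nat \<Rightarrow> real mat) \<Rightarrow> (nat \<Rightarrow> real mat) \<Rightarrow> nat \<Rightarrow> real mat" where
  "qY k Y Xb = (\<lambda>j. if j \<le> k then Y j * transpose_mat (Y j) else Xb j)"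

definition bm_feas :: "(nat \<Rightarrow> nat) \<Rightarrow> nat \<Rightarrow> nat \<Rightarrow> nat \<Rightarrow> nat \<Rightarrow> (nat \<Rightarrow> nat \<Rightarrow> real mat) \<Rightarrow> real mat
     \<Rightarrow> real vec \<Rightarrow> (nat \<Rightarrow> nat) \<Rightarrow> (nat \<Rightarrow> real mat) \<Rightarrow> (nat \<Rightarrow> real mat) \<Rightarrow> real vec \<Rightarrow> bool" where
  "bm_feas n l k d m A A0 b p Y Xb x \<longleftrightarrow>
     (\<forall>j\<in>{1..k}. Y j \<in> carrier_mat (n j) (p j)) \<and> feas n l d m A A0 b (qY k Y Xb) x"

definition bm_global_min :: "(nat \<Rightarrow> nat) \<Rightarrow> nat \<Rightarrow> nat \<Rightarrow> nat \<Rightarrow> nat \<Rightarrow> (nat \<Rightarrow> nat \<Rightarrow> real mat) \<Rightarrow> real mat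
     \<Rightarrow> real vec \<Rightarrow> (nat \<Rightarrow> real mat) \<Rightarrow> real vec \<Rightarrow> (nat \<Rightarrow> nat)
     \<Rightarrow> (nat \<Rightarrow> real mat) \<Rightarrow> (nat \<Rightarrow> real mat) \<Rightarrow> real vec \<Rightarrow> bool" where
  "bm_global_min n l k d m A A0 b C c p Y Xb x \<longleftrightarrow>
     bm_feas n l k d m A A0 b p Y Xb x \<and>
     (\<forall>Y' Xb' x'. bm_feas n l k d m A A0 b p Y' Xb' x' \<longrightarrow>
        obj l C c (qY k Y Xb) x \<le> obj l C c (qY k Y' Xb') x')"

definition two_critical :: "(nat \<Rightarrow> nat) \<Rightarrow> nat \<Rightarrow> nat \<Rightarrow> nat \<Rightarrow> nat \<Rightarrow> (nat \<Rightarrow> nat \<Rightarrow> real mat) \<Rightarrow> real mat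
     \<Rightarrow> real vec \<Rightarrow> (nat \<Rightarrow> real mat) \<Rightarrow> real vec \<Rightarrow> (nat \<Rightarrow> nat)
     \<Rightarrow> (nat \<Rightarrow> real mat) \<Rightarrow> (nat \<Rightarrow> real mat) \<Rightarrow> real vec \<Rightarrow> bool" where
  "two_critical n l k d m A A0 b C c p Y Xb x \<longleftrightarrow>
     bm_feas n l k d m A A0 b p Y Xb x \<and>
     (\<exists>lam\<in>carrier_vec m.
        (\<forall>j\<in>{k+1..l}. psd_mat (n j) (Sblk m n A C lam j)) \<and>
        (\<Sum>j=k+1..l. frob (Sblk m n A C lam j) (Xb j)) = 0 \<and>
        svec A0 c lam = 0\<^sub>v d \<and>
        (\<forall>j\<in>{1..k}. Sblk m n A C lam j * Y j = 0\<^sub>m (n j) (p j)) \<and>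
        (\<forall>j\<in>{1..k}. \<forall>U\<in>carrier_mat (n j) (p j).
            Ablk m A j (U * transpose_mat (Y j)) = 0\<^sub>v m \<longrightarrow>
            0 \<le> frob (Sblk m n A C lam j) (U * transpose_mat U)))"

definition spurious_two_critical :: "(nat \<Rightarrow> nat) \<Rightarrow> nat \<Rightarrow> nat \<Rightarrow> nat \<Rightarrow> nat \<Rightarrow> (nat \<Rightarrow> nat \<Rightarrow> real mat) \<Rightarrow> real mat
     \<Rightarrow> real vec \<Rightarrow> (nat \<Rightarrow> real mat) \<Rightarrow> real vec \<Rightarrow> (nat \<Rightarrow> nat)
     \<Rightarrow> (nat \<Rightarrow> real mat) \<Rightarrow> (nat \<Rightarrow> real mat) \<Rightarrow> real vec \<Rightarrow> bool" where
  "spurious_two_critical n l k d m A A0 b C c p Y Xb x \<longleftrightarrow>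
     two_critical n l k d m A A0 b C c p Y Xb x \<and>
     \<not> bm_global_min n l k d m A A0 b C c p Y Xb x"

end

(*
  Let lam be the multiplier of the spurious 2-critical point and Z = C - A^*(lam), so that
  C = Z + A^*(lam) and c = A_0^T lam hold by construction.

  For j > k the blocks Z_j and X_j are positive semidefinite with <Z_j, X_j> = 0; writing X_j
  as a sum of squares v v^T shows Z_j X_j = 0, whence rank Z_j + rank X_j <= n_j.

  For j <= k, either Y_j has a nonzero kernel vector w, and the second-order condition applied
  to U = v w^T (which satisfies U Y_j^T = 0) gives v^T Z_j v >= 0 for all v, i.e. Z_j is
  positive semidefinite; or Y_j has full column rank p_j, and Z_j Y_j = 0 forces
  rank Z_j <= n_j - p_j.  If the second alternative occurred for no j, every block of Z would
  be positive semidefinite and lam would be a dual certificate: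
  <C, X'> = sum_j <Z_j, X'_j> + lam . b >= lam . b = <C, X> for every feasible X',
  contradicting spuriousness.
*)
theory Submission
  imports Defs "Jordan_Normal_Form.Matrix_Kernel"
begin

section \<open>Positive semidefinite matrices\<close>

definition bform :: "nat \<Rightarrow> real mat \<Rightarrow> (nat \<Rightarrow> real) \<Rightarrow> (nat \<Rightarrow> real) \<Rightarrow> real" where
  "bform n X f g = (\<Sum>r<n. \<Sum>s<n. f r * X $$ (r,s) * g s)"

lemma scalar_prod_mult_mat_vec_eq_bform:
  assumes "X \<in> carrier_mat n n" "v \<in> carrier_vec n"
  shows "v \<bullet> (X *\<^sub>v v) = bform n X (($) v) (($) v)"
  using assms unfolding bform_def scalar_prod_def mult_mat_vec_def
  by (auto simp: sum_distrib_left row_def mult.assoc intro!: sum.cong)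

lemma bform_add_scaled:
  "bform n X (\<lambda>r. f r + t * g r) (\<lambda>r. f r + t * g r) =
   bform n X f f + t * bform n X f g + t * bform n X g f + t\<^sup>2 * bform n X g g"
  unfolding bform_def by (simp add: algebra_simps sum.distrib sum_distrib_left power2_eq_square)

lemma bform_indicator_right:
  assumes "b < n"
  shows "bform n X f (\<lambda>s. if s = b then 1 else 0) = (\<Sum>r<n. f r * X $$ (r,b))"
  using assms unfolding bform_def by (simp add: if_distrib if_distribR cong: if_cong)

lemma bform_indicator:
  assumes "a < n" "b < n"
  shows "bform n X (\<lambda>r. if r = a then 1 else 0) (\<lambda>s. if s = b then 1 else 0) = X $$ (a,b)"
  using assms by (simp add: bform_indicator_right if_distrib if_distribR cong: if_cong)

lemma sym_mat_carrier: "sym_mat n X \<Longrightarrow> X \<in> carrier_mat n n"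
  unfolding sym_mat_def by simp

lemma sym_mat_entry_swap:
  assumes "sym_mat n X" "r < n" "s < n"
  shows "X $$ (s,r) = X $$ (r,s)"
  using assms unfolding sym_mat_def by (metis carrier_matD index_transpose_mat(1))

lemma bform_commute:
  assumes "sym_mat n X"
  shows "bform n X f g = bform n X g f"
  unfolding bform_def
  by (subst sum.swap) (auto intro!: sum.cong simp: sym_mat_entry_swap[OF assms] ac_simps)

lemma psd_mat_sym: "psd_mat n X \<Longrightarrow> sym_mat n X"
  unfolding psd_mat_def by simp

lemma psd_mat_carrier: "psd_mat n X \<Longrightarrow> X \<in> carrier_mat n n"
  by (intro sym_mat_carrier psd_mat_sym)

lemma psd_mat_bform_nonneg:
  assumes "psd_mat n X"
  shows "0 \<le> bform n X f f"
proof -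
  have "0 \<le> vec n f \<bullet> (X *\<^sub>v vec n f)" using assms unfolding psd_mat_def by auto
  also have "\<dots> = bform n X f f"
    using scalar_prod_mult_mat_vec_eq_bform[OF psd_mat_carrier[OF assms], of "vec n f"]
    unfolding bform_def by simp
  finally show ?thesis .
qed

lemma sq_le_of_quadratic_nonneg:
  fixes \<alpha> \<beta> \<gamma> :: real
  assumes nonneg: "\<And>t. 0 \<le> \<alpha> + 2 * t * \<beta> + t\<^sup>2 * \<gamma>" and "0 \<le> \<gamma>"
  shows "\<beta>\<^sup>2 \<le> \<alpha> * \<gamma>"
proof (cases "\<gamma> = 0")
  case True
  have "\<beta> = 0"
  proof (rule ccontr)
    assume "\<beta> \<noteq> 0"
    then show False
      using nonneg[of "- (\<alpha> + 1) / (2 * \<beta>)"] True by (simp add: field_simps)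
  qed
  then show ?thesis using True by simp
next
  case False
  with \<open>0 \<le> \<gamma>\<close> have "0 < \<gamma>" by simp
  have "0 \<le> (\<alpha> + 2 * (- \<beta> / \<gamma>) * \<beta> + (- \<beta> / \<gamma>)\<^sup>2 * \<gamma>) * \<gamma>"
    using nonneg[of "- \<beta> / \<gamma>"] \<open>0 < \<gamma>\<close> by (intro mult_nonneg_nonneg) auto
  also have "\<dots> = \<alpha> * \<gamma> - \<beta>\<^sup>2"
    using \<open>0 < \<gamma>\<close> by (simp add: field_simps power2_eq_square)
  finally show ?thesis by simp
qed

lemma psd_mat_bform_Cauchy_Schwarz:
  assumes "psd_mat n X"
  shows "(bform n X f g)\<^sup>2 \<le> bform n X f f * bform n X g g"
proof (rule sq_le_of_quadratic_nonneg)
  fix t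
  have "0 \<le> bform n X (\<lambda>r. f r + t * g r) (\<lambda>r. f r + t * g r)"
    by (rule psd_mat_bform_nonneg[OF assms])
  then show "0 \<le> bform n X f f + 2 * t * bform n X f g + t\<^sup>2 * bform n X g g"
    unfolding bform_add_scaled bform_commute[OF psd_mat_sym[OF assms], of g f] by simp
qed (rule psd_mat_bform_nonneg[OF assms])

lemma psd_mat_diag_nonneg:
  assumes "psd_mat n X" "a < n"
  shows "0 \<le> X $$ (a,a)"
  using psd_mat_bform_nonneg[OF assms(1), of "\<lambda>r. if r = a then 1 else 0"]
  by (simp add: bform_indicator[OF assms(2) assms(2)])

lemma psd_mat_entry_sq_le:
  assumes "psd_mat n X" "a < n" "b < n"
  shows "(X $$ (a,b))\<^sup>2 \<le> X $$ (a,a) * X $$ (b,b)"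
  using psd_mat_bform_Cauchy_Schwarz[OF assms(1),
      of "\<lambda>r. if r = a then 1 else 0" "\<lambda>r. if r = b then 1 else 0"]
  by (simp add: bform_indicator assms(2,3))

lemma psd_mat_downdate:
  assumes X: "psd_mat n X" and i: "i < n" "0 < X $$ (i,i)"
  shows "psd_mat n (mat n n (\<lambda>(r,s). X $$ (r,s) - X $$ (r,i) * X $$ (s,i) / X $$ (i,i)))"
    (is "psd_mat n ?X'")
  unfolding psd_mat_def sym_mat_def
proof (intro conjI ballI)
  show "?X' \<in> carrier_mat n n" by simp
  show "transpose_mat ?X' = ?X'"
    by (rule eq_matI) (auto simp: sym_mat_entry_swap[OF psd_mat_sym[OF X]])
  fix v :: "real vec" assume v: "v \<in> carrier_vec n"
  let ?f = "($) v" and ?e = "\<lambda>s. if s = i then 1 else (0::real)"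
  let ?a = "X $$ (i,i)"
  have X'_bform: "bform n ?X' ?f ?f = bform n X ?f ?f - (bform n X ?f ?e)\<^sup>2 / ?a"
  proof -
    have "bform n ?X' ?f ?f =
          (\<Sum>r<n. \<Sum>s<n. ?f r * X $$ (r,s) * ?f s - (?f r * X $$ (r,i)) * (?f s * X $$ (s,i)) / ?a)"
      unfolding bform_def by (intro sum.cong refl) (simp add: algebra_simps)
    also have "\<dots> = bform n X ?f ?f - (\<Sum>r<n. ?f r * X $$ (r,i))\<^sup>2 / ?a"
      unfolding bform_def power2_eq_square sum_product
      by (simp add: sum_subtractf sum_divide_distrib)
    finally show ?thesis by (simp add: bform_indicator_right[OF i(1)])
  qed
  have "(bform n X ?f ?e)\<^sup>2 \<le> bform n X ?f ?f * ?a"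
    using psd_mat_bform_Cauchy_Schwarz[OF X, of ?f ?e] by (simp add: bform_indicator i(1))
  then have "0 \<le> bform n ?X' ?f ?f"
    unfolding X'_bform using i(2) by (simp add: field_simps)
  then show "0 \<le> v \<bullet> (?X' *\<^sub>v v)"
    by (subst scalar_prod_mult_mat_vec_eq_bform[OF _ v]) auto
qed

lemma psd_mat_gram:
  assumes "psd_mat n X"
  shows "\<exists>(q::nat) V. \<forall>r<n. \<forall>s<n. X $$ (r,s) = (\<Sum>t<q. V t r * V t s)"
  using assms
proof (induction "card {i. i < n \<and> X $$ (i,i) \<noteq> 0}" arbitrary: X rule: less_induct)
  case less
  show ?case
  proof (cases "\<exists>i<n. X $$ (i,i) \<noteq> 0")
    case False
    then have "X $$ (r,s) = 0" if "r < n" "s < n" for r s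
      using psd_mat_entry_sq_le[OF less.prems that] that by simp
    then show ?thesis by (intro exI[of _ 0]) simp
  next
    case True
    then obtain i where i: "i < n" "X $$ (i,i) \<noteq> 0" by blast
    define a where "a = X $$ (i,i)"
    have "0 < a" using psd_mat_diag_nonneg[OF less.prems i(1)] i(2) unfolding a_def by simp
    define u where "u r = X $$ (r,i) / sqrt a" for r
    define X' where "X' = mat n n (\<lambda>(r,s). X $$ (r,s) - X $$ (r,i) * X $$ (s,i) / a)"
    have X'_entry: "X' $$ (r,s) = X $$ (r,s) - u r * u s" if "r < n" "s < n" for r s
      using that \<open>0 < a\<close> unfolding X'_def u_def by (simp add: real_sqrt_mult[symmetric])
    have psd': "psd_mat n X'"
      unfolding X'_def a_def using psd_mat_downdate[OF less.prems i(1)] \<open>0 < a\<close> a_def by simp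
    have "{j. j < n \<and> X' $$ (j,j) \<noteq> 0} \<subseteq> {j. j < n \<and> X $$ (j,j) \<noteq> 0} - {i}"
    proof safe
      show False if "i < n" "X' $$ (i,i) \<noteq> 0"
        using that \<open>0 < a\<close> unfolding X'_def a_def by simp
      show False if "j < n" "X' $$ (j,j) \<noteq> 0" "X $$ (j,j) = 0" for j
      proof -
        have "(X $$ (j,i))\<^sup>2 \<le> 0" using psd_mat_entry_sq_le[OF less.prems that(1) i(1)] that(3) by simp
        then show False using that X'_entry[OF that(1) that(1)] unfolding u_def by simp
      qed
    qed
    then have "card {j. j < n \<and> X' $$ (j,j) \<noteq> 0} \<le> card ({j. j < n \<and> X $$ (j,j) \<noteq> 0} - {i})"
      by (intro card_mono) auto
    also have "\<dots> < card {j. j < n \<and> X $$ (j,j) \<noteq> 0}"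
      by (rule card_Diff1_less) (use i in auto)
    finally have "\<exists>(q::nat) V. \<forall>r<n. \<forall>s<n. X' $$ (r,s) = (\<Sum>t<q. V t r * V t s)"
      by (rule less.hyps[OF _ psd'])
    then obtain q :: nat and V where V: "\<forall>r<n. \<forall>s<n. X' $$ (r,s) = (\<Sum>t<q. V t r * V t s)"
      by blast
    have "\<forall>r<n. \<forall>s<n. X $$ (r,s) = (\<Sum>t<Suc q. (V(q := u)) t r * (V(q := u)) t s)"
    proof (intro allI impI)
      fix r s assume "r < n" "s < n"
      have "(\<Sum>t<Suc q. (V(q := u)) t r * (V(q := u)) t s) = (\<Sum>t<q. V t r * V t s) + u r * u s"
        by simp
      also have "\<dots> = X $$ (r,s)"
        using V X'_entry[OF \<open>r < n\<close> \<open>s < n\<close>] \<open>r < n\<close> \<open>s < n\<close> by (metis diff_add_cancel)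
      finally show "X $$ (r,s) = (\<Sum>t<Suc q. (V(q := u)) t r * (V(q := u)) t s)" by simp
    qed
    then show ?thesis by (intro exI)
  qed
qed

lemma frob_eq_sum_entries:
  assumes "P \<in> carrier_mat r c" "Q \<in> carrier_mat r c"
  shows "frob P Q = (\<Sum>a<c. \<Sum>b<r. P $$ (b,a) * Q $$ (b,a))"
  using assms unfolding frob_def mtrace_def
  by (auto simp: scalar_prod_def intro!: sum.cong)

lemma frob_minus_left:
  assumes "P \<in> carrier_mat r c" "Q \<in> carrier_mat r c" "M \<in> carrier_mat r c"
  shows "frob (P - Q) M = frob P M - frob Q M"
  using frob_eq_sum_entries[OF minus_carrier_mat[OF assms(2)] assms(3)]
    frob_eq_sum_entries[OF assms(1,3)] frob_eq_sum_entries[OF assms(2,3)] assms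
  by (auto simp: sum_subtractf[symmetric] left_diff_distrib intro!: sum.cong)

lemma frob_zero_right:
  assumes "P \<in> carrier_mat r r"
  shows "frob P (0\<^sub>m r r) = 0"
  using assms unfolding frob_def mtrace_def by (auto intro!: sum.neutral simp: scalar_prod_def)

lemma frob_gram:
  assumes S: "S \<in> carrier_mat n n" and X: "X \<in> carrier_mat n n"
    and gram: "\<forall>r<n. \<forall>s<n. X $$ (r,s) = (\<Sum>t<q. V t r * V t s)"
  shows "frob S X = (\<Sum>t<q. bform n S (V t) (V t))"
proof -
  have "frob S X = (\<Sum>a<n. \<Sum>b<n. \<Sum>t<q. V t b * S $$ (b,a) * V t a)"
    using frob_eq_sum_entries[OF S X] gram by (simp add: sum_distrib_left algebra_simps)
  also have "\<dots> = (\<Sum>b<n. \<Sum>a<n. \<Sum>t<q. V t b * S $$ (b,a) * V t a)"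
    by (rule sum.swap)
  also have "\<dots> = (\<Sum>b<n. \<Sum>t<q. \<Sum>a<n. V t b * S $$ (b,a) * V t a)"
    by (simp add: sum.swap[of _ "{..<n}" "{..<q}"])
  also have "\<dots> = (\<Sum>t<q. \<Sum>b<n. \<Sum>a<n. V t b * S $$ (b,a) * V t a)"
    by (rule sum.swap)
  finally show ?thesis unfolding bform_def .
qed

lemma psd_mat_mult_eq_0_of_bform_eq_0:
  assumes S: "psd_mat n S" and zero: "bform n S f f = 0" and r: "r < n"
  shows "(\<Sum>s<n. S $$ (r,s) * f s) = 0"
proof -
  define g where "g r = (\<Sum>s<n. S $$ (r,s) * f s)" for r
  have "(bform n S g f)\<^sup>2 \<le> 0" using psd_mat_bform_Cauchy_Schwarz[OF S, of g f] zero by simp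
  moreover have "bform n S g f = (\<Sum>r<n. (g r)\<^sup>2)"
    unfolding bform_def g_def by (simp add: sum_distrib_left power2_eq_square mult.assoc)
  ultimately have "(\<Sum>r<n. (g r)\<^sup>2) = 0" by simp
  then have "(g r)\<^sup>2 = 0" using r by (subst (asm) sum_nonneg_eq_0_iff) auto
  then show ?thesis unfolding g_def by simp
qed

lemma frob_psd_nonneg:
  assumes S: "psd_mat n S" and X: "psd_mat n X"
  shows "0 \<le> frob S X"
proof -
  obtain q :: nat and V where V: "\<forall>r<n. \<forall>s<n. X $$ (r,s) = (\<Sum>t<q. V t r * V t s)"
    using psd_mat_gram[OF X] by blast
  show ?thesis
    unfolding frob_gram[OF psd_mat_carrier[OF S] psd_mat_carrier[OF X] V]
    by (intro sum_nonneg psd_mat_bform_nonneg[OF S])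
qed

lemma psd_mat_mult_eq_0_of_frob_eq_0:
  assumes S: "psd_mat n S" and X: "psd_mat n X" and zero: "frob S X = 0"
  shows "S * X = 0\<^sub>m n n"
proof -
  obtain q :: nat and V where V: "\<forall>r<n. \<forall>s<n. X $$ (r,s) = (\<Sum>t<q. V t r * V t s)"
    using psd_mat_gram[OF X] by blast
  have Sc: "S \<in> carrier_mat n n" and Xc: "X \<in> carrier_mat n n"
    using S X by (simp_all add: psd_mat_carrier)
  have "(\<Sum>t<q. bform n S (V t) (V t)) = 0"
    using zero frob_gram[OF Sc Xc V] by simp
  then have V_null: "bform n S (V t) (V t) = 0" if "t < q" for t
    using that by (subst (asm) sum_nonneg_eq_0_iff) (auto intro: psd_mat_bform_nonneg[OF S])
  show ?thesis
  proof (rule eq_matI)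
    fix r s assume "r < dim_row (0\<^sub>m n n :: real mat)" "s < dim_col (0\<^sub>m n n :: real mat)"
    then have rs: "r < n" "s < n" by auto
    have "(S * X) $$ (r,s) = (\<Sum>k<n. S $$ (r,k) * (\<Sum>t<q. V t k * V t s))"
      using Sc Xc rs V by (simp add: scalar_prod_def lessThan_atLeast0)
    also have "\<dots> = (\<Sum>t<q. V t s * (\<Sum>k<n. S $$ (r,k) * V t k))"
      by (simp add: sum_distrib_left algebra_simps sum.swap[of _ "{..<n}" "{..<q}"])
    also have "\<dots> = 0" using psd_mat_mult_eq_0_of_bform_eq_0[OF S V_null rs(1)] by simp
    finally show "(S * X) $$ (r,s) = 0\<^sub>m n n $$ (r,s)" using rs by simp
  qed (use Sc Xc in auto)
qed

section \<open>Rank and kernels\<close>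

lemma rank_nullity_mat:
  fixes S :: "'a :: field mat"
  assumes S: "S \<in> carrier_mat nr nc"
  shows "vec_space.rank nr S + kernel_dim S = nc"
proof -
  interpret W: vec_space "TYPE('a)" nr .
  interpret V: vec_space "TYPE('a)" nc .
  interpret K: kernel nr nc S by unfold_locales (rule S)
  interpret L: linear_map class_ring "module_vec TYPE('a) nc" "module_vec TYPE('a) nr" "\<lambda>v. S *\<^sub>v v"
    by unfold_locales
      (use S in \<open>auto simp: LinearCombinations.module_hom_def module_vec_simps class_ring_simps
         mult_add_distrib_mat_vec mult_mat_vec\<close>)
  have "L.imT = W.col_space S"
    using W.col_space_eq[OF S] S by (auto simp: L.im_def module_vec_simps)
  moreover have "L.kerT = mat_kernel S"
    using S by (auto simp: L.ker_def module_vec_simps mat_kernel_def)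
  ultimately show ?thesis
    using L.rank_nullity V.fin_dim V.dim_is_n S
    unfolding W.rank_def W.col_space_def by simp
qed

lemma kernel_dim_eq_0_iff:
  fixes S :: "'a :: field mat"
  assumes S: "S \<in> carrier_mat nr nc"
  shows "kernel_dim S = 0 \<longleftrightarrow> mat_kernel S = {0\<^sub>v nc}"
proof -
  interpret K: kernel nr nc S by unfold_locales (rule S)
  obtain B where B: "finite B" "K.basis B" using kernel_basis_exists[OF S] by blast
  have "K.dim = card B" using K.Ker.dim_basis B by blast
  moreover have "0\<^sub>v nc \<notin> B"
    using K.Ker.vs_zero_lin_dep B unfolding K.Ker.basis_def by auto
  ultimately show ?thesis using B unfolding K.Ker.basis_def
    by (auto simp: K.Ker.span_empty)
qed

lemma rank_le_kernel_dim_of_mult_eq_0: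
  fixes S B :: "'a :: field mat"
  assumes S: "S \<in> carrier_mat nr nc" and B: "B \<in> carrier_mat nc q" and SB: "S * B = 0\<^sub>m nr q"
  shows "vec_space.rank nc B \<le> kernel_dim S"
proof -
  interpret V: vec_space "TYPE('a)" nc .
  interpret K: kernel nr nc S by unfold_locales (rule S)
  have "V.col_space B \<subseteq> mat_kernel S"
  proof
    fix y assume "y \<in> V.col_space B"
    then obtain x where x: "x \<in> carrier_vec q" "y = B *\<^sub>v x"
      using V.col_space_eq[OF B] B by auto
    have "S *\<^sub>v y = (S * B) *\<^sub>v x" using S B x by simp
    then show "y \<in> mat_kernel S" using S B x SB by (auto intro!: mat_kernelI)
  qed
  moreover have "subspace class_ring (mat_kernel S) V.V"
    unfolding subspace_def submodule_def using V.vectorspace_axioms V.module_axioms S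
    by (auto simp: mat_kernel_def module_vec_simps class_ring_simps mult_add_distrib_mat_vec mult_mat_vec)
  moreover have "subspace class_ring (V.col_space B) V.V"
    unfolding V.col_space_def by (rule V.span_is_subspace) (use B cols_dim in blast)
  ultimately have "subspace class_ring (V.col_space B) K.VK"
    using V.nested_subspaces by blast
  moreover have "K.Ker.fin_dim"
    using kernel_basis_exists[OF S] unfolding K.Ker.basis_def K.Ker.fin_dim_def by blast
  ultimately show ?thesis
    using K.Ker.subspace_dim V.fin_dim_span_cols[OF B] unfolding V.rank_def V.col_space_def
    by simp
qed

lemma rank_add_rank_le_of_mult_eq_0:
  fixes S B :: "'a :: field mat"
  assumes "S \<in> carrier_mat nr nc" "B \<in> carrier_mat nc q" "S * B = 0\<^sub>m nr q"
  shows "vec_space.rank nr S + vec_space.rank nc B \<le> nc"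
  using rank_le_kernel_dim_of_mult_eq_0[OF assms] rank_nullity_mat[OF assms(1)] by simp

lemma rank_eq_dim_col_of_trivial_kernel:
  fixes Y :: "'a :: field mat"
  assumes "Y \<in> carrier_mat nr nc" "mat_kernel Y = {0\<^sub>v nc}"
  shows "vec_space.rank nr Y = nc"
  using rank_nullity_mat[OF assms(1)] kernel_dim_eq_0_iff[OF assms(1)] assms(2) by simp

lemma psd_mat_rank_add_rank_le_of_frob_eq_0:
  assumes "psd_mat n S" "psd_mat n X" "frob S X = 0"
  shows "vec_space.rank n S + vec_space.rank n X \<le> n"
  using rank_add_rank_le_of_mult_eq_0 psd_mat_mult_eq_0_of_frob_eq_0[OF assms] psd_mat_carrier assms(1,2)
  by blast

section \<open>Second-order conditions\<close>

lemma frob_sym_mult_transpose_eq_0: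
  assumes S: "sym_mat n S" and Y: "Y \<in> carrier_mat n p" and SY: "S * Y = 0\<^sub>m n p"
  shows "frob S (Y * transpose_mat Y) = 0"
proof -
  have "transpose_mat S * (Y * transpose_mat Y) = (S * Y) * transpose_mat Y"
    using S Y unfolding sym_mat_def by (metis assoc_mult_mat transpose_carrier_mat)
  also have "\<dots> = 0\<^sub>m n n" unfolding SY using Y by simp
  finally show ?thesis unfolding frob_def mtrace_def by simp
qed

lemma psd_mat_of_null_direction:
  assumes S: "sym_mat n S" and Y: "Y \<in> carrier_mat n p"
    and w: "w \<in> carrier_vec p" "w \<noteq> 0\<^sub>v p" "Y *\<^sub>v w = 0\<^sub>v n"
    and second: "\<forall>U\<in>carrier_mat n p. U * transpose_mat Y = 0\<^sub>m n n \<longrightarrow> 0 \<le> frob S (U * transpose_mat U)"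
  shows "psd_mat n S"
  unfolding psd_mat_def
proof (intro conjI ballI)
  show "sym_mat n S" by fact
  have Sc: "S \<in> carrier_mat n n" using sym_mat_carrier[OF S] .
  fix v :: "real vec" assume v: "v \<in> carrier_vec n"
  define U where "U = mat n p (\<lambda>(r,s). v $ r * w $ s)"
  have Uc: "U \<in> carrier_mat n p" unfolding U_def by simp
  have Yw: "(\<Sum>k<p. Y $$ (s,k) * w $ k) = 0" if "s < n" for s
    using arg_cong[OF w(3), of "\<lambda>u. u $ s"] Y w(1) that
    by (simp add: scalar_prod_def lessThan_atLeast0)
  have "U * transpose_mat Y = 0\<^sub>m n n"
  proof (rule eq_matI)
    fix r s assume "r < dim_row (0\<^sub>m n n :: real mat)" "s < dim_col (0\<^sub>m n n :: real mat)"
    then have rs: "r < n" "s < n" by auto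
    have "(U * transpose_mat Y) $$ (r,s) = v $ r * (\<Sum>k<p. Y $$ (s,k) * w $ k)"
      using rs Y unfolding U_def by (simp add: scalar_prod_def lessThan_atLeast0 sum_distrib_left ac_simps)
    then show "(U * transpose_mat Y) $$ (r,s) = 0\<^sub>m n n $$ (r,s)" using rs Yw by simp
  qed (use Y Uc in auto)
  then have nonneg: "0 \<le> frob S (U * transpose_mat U)" using second Uc by blast
  define ww where "ww = (\<Sum>k<p. (w $ k)\<^sup>2)"
  have UU: "(U * transpose_mat U) $$ (b,a) = ww * (v $ b * v $ a)" if "b < n" "a < n" for a b
    using that unfolding U_def ww_def
    by (simp add: scalar_prod_def lessThan_atLeast0 sum_distrib_left power2_eq_square ac_simps)
  have "frob S (U * transpose_mat U) = (\<Sum>a<n. \<Sum>b<n. S $$ (b,a) * (ww * (v $ b * v $ a)))"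
    using frob_eq_sum_entries[OF Sc, of "U * transpose_mat U"] Uc UU by simp
  also have "\<dots> = ww * (\<Sum>b<n. \<Sum>a<n. v $ b * S $$ (b,a) * v $ a)"
    by (subst sum.swap) (simp add: sum_distrib_left ac_simps)
  finally have frob_U: "frob S (U * transpose_mat U) = ww * bform n S (($) v) (($) v)"
    unfolding bform_def .
  obtain k where k: "k < p" "w $ k \<noteq> 0" using w(1,2) by (metis carrier_vecD eq_vecI index_zero_vec)
  have "0 < ww" unfolding ww_def
    by (rule sum_pos2[of _ k]) (use k in auto)
  then have "0 \<le> bform n S (($) v) (($) v)" using nonneg frob_U by (simp add: zero_le_mult_iff)
  then show "0 \<le> v \<bullet> (S *\<^sub>v v)" using scalar_prod_mult_mat_vec_eq_bform[OF Sc v] by simp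
qed

lemma second_order_psd_or_rank_le:
  assumes S: "sym_mat n S" and Y: "Y \<in> carrier_mat n p" and SY: "S * Y = 0\<^sub>m n p"
    and second: "\<forall>U\<in>carrier_mat n p. U * transpose_mat Y = 0\<^sub>m n n \<longrightarrow> 0 \<le> frob S (U * transpose_mat U)"
  shows "psd_mat n S \<or> (p \<le> n \<and> vec_space.rank n S \<le> n - p)"
proof (cases "mat_kernel Y = {0\<^sub>v p}")
  case True
  then have "vec_space.rank n Y = p" by (rule rank_eq_dim_col_of_trivial_kernel[OF Y])
  moreover have "vec_space.rank n S + vec_space.rank n Y \<le> n"
    by (rule rank_add_rank_le_of_mult_eq_0[OF sym_mat_carrier[OF S] Y SY])
  ultimately have "p \<le> n \<and> vec_space.rank n S \<le> n - p" by linarith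
  then show ?thesis ..
next
  case False
  moreover have "0\<^sub>v p \<in> mat_kernel Y" by (rule mat_kernelI[OF Y]) (use Y in auto)
  ultimately obtain w where "w \<in> mat_kernel Y" "w \<noteq> 0\<^sub>v p" by blast
  then have "psd_mat n S"
    using psd_mat_of_null_direction[OF S Y _ _ _ second] mat_kernelD[OF Y] mat_kernel_carrier[OF Y]
    by blast
  then show ?thesis ..
qed

section \<open>Lagrange multipliers of the Burer-Monteiro problem\<close>

lemma frob_adjblk:
  assumes A: "\<forall>i<m. A i j \<in> carrier_mat (n j) (n j)" and M: "M \<in> carrier_mat (n j) (n j)"
  shows "frob (adjblk m n A lam j) M = (\<Sum>i<m. lam $ i * frob (A i j) M)"
proof -
  have "frob (adjblk m n A lam j) M =
        (\<Sum>a<n j. \<Sum>b<n j. \<Sum>i<m. lam $ i * (A i j $$ (b,a) * M $$ (b,a)))"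
    using frob_eq_sum_entries[OF _ M, of "adjblk m n A lam j"]
    by (simp add: adjblk_def sum_distrib_right mult.assoc)
  also have "\<dots> = (\<Sum>i<m. \<Sum>a<n j. \<Sum>b<n j. lam $ i * (A i j $$ (b,a) * M $$ (b,a)))"
    by (simp add: sum.swap[of _ "{..<n j}" "{..<m}"])
  also have "\<dots> = (\<Sum>i<m. lam $ i * frob (A i j) M)"
    using A M by (simp add: frob_eq_sum_entries[of _ "n j" "n j"] sum_distrib_left)
  finally show ?thesis .
qed

locale bm_problem =
  fixes n :: "nat \<Rightarrow> nat" and l k d m :: nat
    and A :: "nat \<Rightarrow> nat \<Rightarrow> real mat" and A0 :: "real mat" and b :: "real vec"
    and C :: "nat \<Rightarrow> real mat" and c :: "real vec" and p :: "nat \<Rightarrow> nat"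
  assumes k_le_l: "k \<le> l"
    and A_sym: "\<forall>i<m. \<forall>j\<in>{1..l}. sym_mat (n j) (A i j)"
    and A0_carrier: "A0 \<in> carrier_mat m d"
    and C_sym: "\<forall>j\<in>{1..l}. sym_mat (n j) (C j)"
    and c_carrier: "c \<in> carrier_vec d"
begin

abbreviation S :: "real vec \<Rightarrow> nat \<Rightarrow> real mat" where
  "S \<equiv> Sblk m n A C"

lemma A_carrier: "\<forall>i<m. A i j \<in> carrier_mat (n j) (n j)" if "j \<in> {1..l}"
  using A_sym that sym_mat_carrier by blast

lemma S_carrier: "S lam j \<in> carrier_mat (n j) (n j)"
  unfolding Sblk_def by (rule minus_carrier_mat) (simp add: adjblk_def)

lemma S_entry:
  assumes "j \<in> {1..l}" "r < n j" "s < n j"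
  shows "S lam j $$ (r,s) = C j $$ (r,s) - (\<Sum>i<m. lam $ i * A i j $$ (r,s))"
  using assms C_sym sym_mat_carrier unfolding Sblk_def by (auto simp: adjblk_def)

lemma S_sym:
  assumes j: "j \<in> {1..l}"
  shows "sym_mat (n j) (S lam j)"
  unfolding sym_mat_def
proof
  show "transpose_mat (S lam j) = S lam j"
  proof (rule eq_matI)
    fix r s assume "r < dim_row (S lam j)" "s < dim_col (S lam j)"
    then have rs: "r < n j" "s < n j" using S_carrier[of lam j] by auto
    have "C j $$ (s,r) = C j $$ (r,s)" using sym_mat_entry_swap[OF C_sym[rule_format, OF j] rs] .
    moreover have "A i j $$ (s,r) = A i j $$ (r,s)" if "i < m" for i
      using sym_mat_entry_swap[OF A_sym[rule_format, OF that j] rs] .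
    ultimately show "transpose_mat (S lam j) $$ (r,s) = S lam j $$ (r,s)"
      using S_entry[OF j rs] S_entry[OF j rs(2,1)] S_carrier[of lam j] rs by simp
  qed (use S_carrier[of lam j] in auto)
qed (rule S_carrier)

lemma C_eq_S_add_adjblk:
  assumes j: "j \<in> {1..l}"
  shows "C j = S lam j + adjblk m n A lam j"
proof -
  have "C j \<in> carrier_mat (n j) (n j)" using C_sym j sym_mat_carrier by blast
  then show ?thesis unfolding Sblk_def by (intro eq_matI) (auto simp: adjblk_def)
qed

lemma c_eq_of_svec_eq_0:
  assumes "svec A0 c lam = 0\<^sub>v d"
  shows "c = transpose_mat A0 *\<^sub>v lam"
proof (rule eq_vecI)
  fix i assume "i < dim_vec (transpose_mat A0 *\<^sub>v lam)"
  then have i: "i < d" using A0_carrier by simp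
  then have "(c - transpose_mat A0 *\<^sub>v lam) $ i = 0"
    using assms unfolding svec_def by (metis index_zero_vec(1))
  then show "c $ i = (transpose_mat A0 *\<^sub>v lam) $ i" using i A0_carrier by simp
qed (use c_carrier A0_carrier in simp)

lemma obj_eq_frob_S_add:
  assumes feas: "feas n l d m A A0 b X x" and lam: "lam \<in> carrier_vec m"
    and c: "c = transpose_mat A0 *\<^sub>v lam"
  shows "obj l C c X x = (\<Sum>j=1..l. frob (S lam j) (X j)) + lam \<bullet> b"
proof -
  have X: "X j \<in> carrier_mat (n j) (n j)" if "j \<in> {1..l}" for j
    using feas that unfolding feas_def by (blast intro: psd_mat_carrier)
  have x: "x \<in> carrier_vec d" and b: "Aop m l A A0 X x = b" using feas unfolding feas_def by auto
  have frob_S: "frob (S lam j) (X j) = frob (C j) (X j) - (\<Sum>i<m. lam $ i * frob (A i j) (X j))"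
    if j: "j \<in> {1..l}" for j
    using frob_minus_left[of "C j" "n j" "n j" "adjblk m n A lam j" "X j"] frob_adjblk[where m = m and A = A and n = n and j = j, OF A_carrier[OF j] X[OF j]]
      C_sym j X[OF j] sym_mat_carrier unfolding Sblk_def by (auto simp: adjblk_def)
  have "c \<bullet> x = (\<Sum>i<m. lam $ i * (row A0 i \<bullet> x))"
    using transpose_vec_mult_scalar[OF A0_carrier x lam] lam A0_carrier
    unfolding c by (simp add: scalar_prod_def[of lam] lessThan_atLeast0)
  moreover have "lam \<bullet> b = (\<Sum>i<m. lam $ i * ((\<Sum>j=1..l. frob (A i j) (X j)) + row A0 i \<bullet> x))"
    unfolding b[symmetric] Aop_def using lam by (simp add: scalar_prod_def lessThan_atLeast0)
  moreover have "(\<Sum>i<m. \<Sum>j=1..l. lam $ i * frob (A i j) (X j)) = (\<Sum>j=1..l. \<Sum>i<m. lam $ i * frob (A i j) (X j))"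
    by (rule sum.swap)
  ultimately show ?thesis
    unfolding obj_def using frob_S
    by (simp add: sum_subtractf distrib_left sum.distrib sum_distrib_left)
qed

lemma bm_global_min_of_psd_S:
  assumes feas: "bm_feas n l k d m A A0 b p Y Xb x" and lam: "lam \<in> carrier_vec m"
    and c: "c = transpose_mat A0 *\<^sub>v lam"
    and psd: "\<forall>j\<in>{1..l}. psd_mat (n j) (S lam j)"
    and slack: "(\<Sum>j=1..l. frob (S lam j) (qY k Y Xb j)) = 0"
  shows "bm_global_min n l k d m A A0 b C c p Y Xb x"
  unfolding bm_global_min_def
proof (intro conjI allI impI)
  fix Y' Xb' x' assume "bm_feas n l k d m A A0 b p Y' Xb' x'"
  then have feas': "feas n l d m A A0 b (qY k Y' Xb') x'" unfolding bm_feas_def by simp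
  have "obj l C c (qY k Y Xb) x = lam \<bullet> b"
    using obj_eq_frob_S_add[OF _ lam c] feas slack unfolding bm_feas_def by simp
  also have "\<dots> \<le> (\<Sum>j=1..l. frob (S lam j) (qY k Y' Xb' j)) + lam \<bullet> b"
    using psd feas' unfolding feas_def by (auto intro!: sum_nonneg frob_psd_nonneg)
  also have "\<dots> = obj l C c (qY k Y' Xb') x'"
    using obj_eq_frob_S_add[OF feas' lam c] by simp
  finally show "obj l C c (qY k Y Xb) x \<le> obj l C c (qY k Y' Xb') x'" .
qed (rule feas)

definition two_critical_multiplier :: "(nat \<Rightarrow> real mat) \<Rightarrow> (nat \<Rightarrow> real mat) \<Rightarrow> real vec \<Rightarrow> bool" where
  "two_critical_multiplier Y Xb lam \<longleftrightarrow> lam \<in> carrier_vec m \<and>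
     (\<forall>j\<in>{k+1..l}. psd_mat (n j) (S lam j)) \<and>
     (\<Sum>j=k+1..l. frob (S lam j) (Xb j)) = 0 \<and>
     svec A0 c lam = 0\<^sub>v d \<and>
     (\<forall>j\<in>{1..k}. S lam j * Y j = 0\<^sub>m (n j) (p j)) \<and>
     (\<forall>j\<in>{1..k}. \<forall>U\<in>carrier_mat (n j) (p j).
        Ablk m A j (U * transpose_mat (Y j)) = 0\<^sub>v m \<longrightarrow> 0 \<le> frob (S lam j) (U * transpose_mat U))"

lemma two_critical_iff:
  "two_critical n l k d m A A0 b C c p Y Xb x \<longleftrightarrow>
     bm_feas n l k d m A A0 b p Y Xb x \<and> (\<exists>lam. two_critical_multiplier Y Xb lam)"
  unfolding two_critical_def two_critical_multiplier_def by blast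

lemma complementary_slackness:
  assumes feas: "bm_feas n l k d m A A0 b p Y Xb x" and mult: "two_critical_multiplier Y Xb lam"
    and j: "j \<in> {k+1..l}"
  shows "frob (S lam j) (qY k Y Xb j) = 0"
proof -
  have "0 \<le> frob (S lam i) (Xb i)" if i: "i \<in> {k+1..l}" for i
  proof (rule frob_psd_nonneg)
    show "psd_mat (n i) (S lam i)" using mult i unfolding two_critical_multiplier_def by blast
    have "psd_mat (n i) (qY k Y Xb i)" using feas i unfolding bm_feas_def feas_def by auto
    then show "psd_mat (n i) (Xb i)" using i unfolding qY_def by simp
  qed
  then show ?thesis
    using mult j unfolding two_critical_multiplier_def qY_def
    by (subst (asm) sum_nonneg_eq_0_iff) auto
qed

lemma rank_S_le_of_two_critical:
  assumes feas: "bm_feas n l k d m A A0 b p Y Xb x" and mult: "two_critical_multiplier Y Xb lam"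
    and j: "j \<in> {k+1..l}"
  shows "mrank (S lam j) \<le> n j - mrank (qY k Y Xb j)"
proof -
  have X: "psd_mat (n j) (qY k Y Xb j)" and S: "psd_mat (n j) (S lam j)"
    using feas mult j k_le_l unfolding bm_feas_def feas_def two_critical_multiplier_def by auto
  moreover have "dim_row (S lam j) = n j" "dim_row (qY k Y Xb j) = n j"
    using S_carrier[of lam j] psd_mat_carrier[OF X] by auto
  ultimately show ?thesis
    using psd_mat_rank_add_rank_le_of_frob_eq_0[OF S X complementary_slackness[OF feas mult j]]
    unfolding mrank_def by simp
qed

lemma rank_drop_of_not_bm_global_min:
  assumes feas: "bm_feas n l k d m A A0 b p Y Xb x" and mult: "two_critical_multiplier Y Xb lam"
    and not_min: "\<not> bm_global_min n l k d m A A0 b C c p Y Xb x"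
  shows "\<exists>j\<in>{1..k}. p j \<le> n j \<and> mrank (S lam j) \<le> n j - p j"
proof (rule ccontr)
  assume no_drop: "\<not> ?thesis"
  have lam: "lam \<in> carrier_vec m" and "svec A0 c lam = 0\<^sub>v d"
    using mult unfolding two_critical_multiplier_def by auto
  have c: "c = transpose_mat A0 *\<^sub>v lam" by (rule c_eq_of_svec_eq_0) fact
  have psd_low: "psd_mat (n j) (S lam j)" and slack_low: "frob (S lam j) (qY k Y Xb j) = 0"
    if j: "j \<in> {1..k}" for j
  proof -
    have jl: "j \<in> {1..l}" using j k_le_l by auto
    have Y: "Y j \<in> carrier_mat (n j) (p j)" using feas j unfolding bm_feas_def by auto
    have SY: "S lam j * Y j = 0\<^sub>m (n j) (p j)" using mult j unfolding two_critical_multiplier_def by auto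
    have "Ablk m A j (0\<^sub>m (n j) (n j)) = 0\<^sub>v m"
      using A_carrier[OF jl] frob_zero_right unfolding Ablk_def by (intro eq_vecI) auto
    then have "\<forall>U\<in>carrier_mat (n j) (p j). U * transpose_mat (Y j) = 0\<^sub>m (n j) (n j) \<longrightarrow>
            0 \<le> frob (S lam j) (U * transpose_mat U)"
      using mult j unfolding two_critical_multiplier_def by auto
    then show "psd_mat (n j) (S lam j)"
      using second_order_psd_or_rank_le[OF S_sym[OF jl] Y SY] no_drop j S_carrier[of lam j]
      unfolding mrank_def by auto
    show "frob (S lam j) (qY k Y Xb j) = 0"
      using frob_sym_mult_transpose_eq_0[OF S_sym[OF jl] Y SY] j unfolding qY_def by simp
  qed
  have psd_slack: "psd_mat (n j) (S lam j) \<and> frob (S lam j) (qY k Y Xb j) = 0" if "j \<in> {1..l}" for j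
  proof -
    from that consider "j \<in> {1..k}" | "j \<in> {k+1..l}" by fastforce
    then show ?thesis
      by cases (use psd_low slack_low mult complementary_slackness[OF feas mult] in
          \<open>auto simp: two_critical_multiplier_def\<close>)
  qed
  then have "\<forall>j\<in>{1..l}. psd_mat (n j) (S lam j)" by blast
  moreover have "(\<Sum>j=1..l. frob (S lam j) (qY k Y Xb j)) = 0"
    by (intro sum.neutral) (use psd_slack in blast)
  ultimately show False
    using bm_global_min_of_psd_S[OF feas lam c] not_min by blast
qed

end

theorem theorem12:
  fixes n :: "nat \<Rightarrow> nat" and l k d m :: nat
    and A :: "nat \<Rightarrow> nat \<Rightarrow> real mat" and A0 :: "real mat" and b :: "real vec"
    and C :: "nat \<Rightarrow> real mat" and c :: "real vec" and p :: "nat \<Rightarrow> nat"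
  assumes kl: "1 \<le> k" "k \<le> l"
    and npos: "\<forall>j\<in>{1..l}. 0 < n j"
    and Asym: "\<forall>i<m. \<forall>j\<in>{1..l}. sym_mat (n j) (A i j)"
    and A0dim: "A0 \<in> carrier_mat m d"
    and bdim: "b \<in> carrier_vec m"
    and Csym: "\<forall>j\<in>{1..l}. sym_mat (n j) (C j)"
    and cdim: "c \<in> carrier_vec d"
    and attained: "\<exists>X x. feas n l d m A A0 b X x \<and>
                     (\<forall>X' x'. feas n l d m A A0 b X' x' \<longrightarrow> obj l C c X x \<le> obj l C c X' x')"
    and ppos: "\<forall>j\<in>{1..k}. 0 < p j"
    and spur: "\<exists>Y Xb x. spurious_two_critical n l k d m A A0 b C c p Y Xb x"
  shows "\<exists>lam\<in>carrier_vec m. \<exists>Z :: nat \<Rightarrow> real mat.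
           (\<forall>j\<in>{1..l}. sym_mat (n j) (Z j) \<and> C j = Z j + adjblk m n A lam j) \<and>
           c = 0\<^sub>v d + transpose_mat A0 *\<^sub>v lam \<and>
           (\<exists>j\<in>{1..k}. p j \<le> n j \<and> mrank (Z j) \<le> n j - p j) \<and>
           (\<exists>X x. feas n l d m A A0 b X x \<and>
                  (\<forall>j\<in>{k+1..l}. mrank (Z j) \<le> n j - mrank (X j)))"
proof -
  interpret bm_problem n l k d m A A0 b C c p
    using kl Asym A0dim Csym cdim by unfold_locales auto
  obtain Y Xb x lam where feas: "bm_feas n l k d m A A0 b p Y Xb x"
    and mult: "two_critical_multiplier Y Xb lam"
    and not_min: "\<not> bm_global_min n l k d m A A0 b C c p Y Xb x"
    using spur unfolding spurious_two_critical_def two_critical_iff by blast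
  have lam: "lam \<in> carrier_vec m" and "svec A0 c lam = 0\<^sub>v d"
    using mult unfolding two_critical_multiplier_def by auto
  then have "c = transpose_mat A0 *\<^sub>v lam" by (intro c_eq_of_svec_eq_0) simp
  then have "c = 0\<^sub>v d + transpose_mat A0 *\<^sub>v lam" using cdim by simp
  moreover have "feas n l d m A A0 b (qY k Y Xb) x"
    using feas unfolding bm_feas_def by blast
  ultimately show ?thesis
    using S_sym C_eq_S_add_adjblk rank_drop_of_not_bm_global_min[OF feas mult not_min]
      rank_S_le_of_two_critical[OF feas mult] lam
    by blast
qed

end
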